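(* Consider the following reduced-cyclic-prefix (RCP) ODDM system. Let $M,N,Q$ be positive integers, $T_s>0$, $T=MT_s$, and let $a(t)$ be a pulse with $a(t)=0$ for $|t|\ge QT_s$. Given data symbols $X[m,n]\in\mathbb{C}$, $0\le m\le M-1$, $0\le n\le N-1$, define $$x[m,\dot n]=\frac{1}{\sqrt N}\sum_{n=0}^{N-1}X[m,n]e^{j2\pi\frac{n\dot n}{N}},\quad 0\le \dot n\le N-1,$$ and the prefix $x[m,-1]=x[m,N-1]$. The transmitted baseband signal is $$s(t)=\sum_{m=0}^{M-1}\sum_{\dot n=-1}^{N-1}x[m,\dot n]\,a(t-mT_s-\dot nT).$$ The (noiseless) received baseband signal over $P$ paths is $$r(t)=\sum_{i=1}^{P}h_i e^{j2\pi\nu_i t}\,s\big(t-(\tau_i-b_i t)\big),$$ with complex gains $h_i$, delays $\tau_i=l_iT_s$, Doppler scaling factors $b_i$ and Doppler shifts $\nu_i=\frac{k_i}{NMT_s}$ (where $l_i,k_i$ are real, not necessarily integer). Assume $l_{\min}\le l_i\le l_{\max}$ with $l_{\min},l_{\max}$ integers, $|b_i|\le b_{\max}<1$, and that the synchronization is such that $$\lceil l_{\min}-Q-b_{\max}(NM-1)\rceil=0,\qquad l'_{\max}:=\lfloor l_{\max}+Q+b_{\max}(NM-1)\rfloor<M.$$ The receiver samples $y[m,\dot n]=r(mT_s+\dot nT)$ and computes $$Y[m,n]=\frac{1}{\sqrt N}\sum_{\dot n=0}^{N-1}y[m,\dot n]e^{-j2\pi\frac{n\dot n}{N}}.$$ Then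 for all $0\le m\le M-1$, $0\le n\le N-1$, $$Y[m,n]=\sum_{l=0}^{l'_{\max}}\sum_{k=0}^{N-1}X[(m-l)_M,(n-k)_N]\,\phi[m-l,n-k]\,G_l(m,k),$$ where $$G_l(m,k)=\sum_{i=1}^{P}h_i\, e^{j2\pi\frac{k_i m}{NM}}\frac{1}{N}\sum_{\dot n=0}^{N-1}e^{-j2\pi\frac{\dot n(k-k_i)}{N}}\,a\Big(\big(l-l_i+b_i(m+\dot nM)\big)T_s\Big),$$ and, for integers $m',n'$, $$\phi[m',n']=\begin{cases}1,&0\le m'\le M-1,\\ e^{-j2\pi\frac{n'}{N}},&-M+1\le m'<0.\end{cases}$$
   Context: $(x)_M$ denotes $x$ modulo $M$ taken in $\{0,\dots,M-1\}$, and similarly $(x)_N$. $j$ is the imaginary unit. Noise is ignored. The quantities $b_i=\mathrm{v}_i/c$ model the wideband (Doppler squint) effect: each path has a time-varying delay $\tau_i-b_i t$. *)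

theory Defs
  imports Complex_Main
begin

text \<open>Indices are integers; data symbols
  X m n are meaningful for 0 \<le> m \<le> M-1, 0 \<le> n \<le> N-1.
  Paths are indexed by i = 1..P with gain h i, normalized delay lp i
  (tau_i = lp i * Ts), normalized Doppler kp i (nu_i = kp i / (N M Ts))
  and Doppler scaling factor b i.\<close>

definition oddm_x :: "nat \<Rightarrow> (int \<Rightarrow> int \<Rightarrow> complex) \<Rightarrow> int \<Rightarrow> int \<Rightarrow> complex" where
  "oddm_x N X m nd =
     (let nd' = (if nd = -1 then int N - 1 else nd) in
      complex_of_real (1 / sqrt (real N)) *
      (\<Sum>n = 0..int N - 1. X m n * exp (2 * pi * \<i> * complex_of_real (real_of_int (n * nd') / real N))))"

definition oddm_s :: "nat \<Rightarrow> nat \<Rightarrow> real \<Rightarrow> (real \<Rightarrow> complex) \<Rightarrow> (int \<Rightarrow> int \<Rightarrow> complex) \<Rightarrow> real \<Rightarrow> complex" where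
  "oddm_s M N Ts a X t =
     (\<Sum>m = 0..int M - 1. \<Sum>nd = -1..int N - 1.
        oddm_x N X m nd * a (t - real_of_int m * Ts - real_of_int nd * (real M * Ts)))"

definition oddm_r :: "nat \<Rightarrow> nat \<Rightarrow> real \<Rightarrow> (real \<Rightarrow> complex) \<Rightarrow> (int \<Rightarrow> int \<Rightarrow> complex)
    \<Rightarrow> nat \<Rightarrow> (nat \<Rightarrow> complex) \<Rightarrow> (nat \<Rightarrow> real) \<Rightarrow> (nat \<Rightarrow> real) \<Rightarrow> (nat \<Rightarrow> real) \<Rightarrow> real \<Rightarrow> complex" where
  "oddm_r M N Ts a X P h lp kp b t =
     (\<Sum>i = 1..P. h i * exp (2 * pi * \<i> * complex_of_real (kp i / (real N * real M * Ts) * t))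
        * oddm_s M N Ts a X (t - (lp i * Ts - b i * t)))"

definition oddm_Y :: "nat \<Rightarrow> nat \<Rightarrow> real \<Rightarrow> (real \<Rightarrow> complex) \<Rightarrow> (int \<Rightarrow> int \<Rightarrow> complex)
    \<Rightarrow> nat \<Rightarrow> (nat \<Rightarrow> complex) \<Rightarrow> (nat \<Rightarrow> real) \<Rightarrow> (nat \<Rightarrow> real) \<Rightarrow> (nat \<Rightarrow> real) \<Rightarrow> int \<Rightarrow> int \<Rightarrow> complex" where
  "oddm_Y M N Ts a X P h lp kp b m n =
     complex_of_real (1 / sqrt (real N)) *
     (\<Sum>nd = 0..int N - 1.
        oddm_r M N Ts a X P h lp kp b (real_of_int m * Ts + real_of_int nd * (real M * Ts))
        * exp (- 2 * pi * \<i> * complex_of_real (real_of_int (n * nd) / real N)))"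

definition oddm_G :: "nat \<Rightarrow> nat \<Rightarrow> real \<Rightarrow> (real \<Rightarrow> complex)
    \<Rightarrow> nat \<Rightarrow> (nat \<Rightarrow> complex) \<Rightarrow> (nat \<Rightarrow> real) \<Rightarrow> (nat \<Rightarrow> real) \<Rightarrow> (nat \<Rightarrow> real) \<Rightarrow> int \<Rightarrow> int \<Rightarrow> int \<Rightarrow> complex" where
  "oddm_G M N Ts a P h lp kp b l m k =
     (\<Sum>i = 1..P. h i * exp (2 * pi * \<i> * complex_of_real (kp i * real_of_int m / (real N * real M)))
        * complex_of_real (1 / real N) *
        (\<Sum>nd = 0..int N - 1.
           exp (- 2 * pi * \<i> * complex_of_real (real_of_int nd * (real_of_int k - kp i) / real N))
           * a ((real_of_int l - lp i + b i * (real_of_int m + real_of_int nd * real M)) * Ts)))"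

text \<open>phi is only specified for -M+1 \<le> m' \<le> M-1; outside that range we set it to 0
  (it is never used there).\<close>
definition oddm_phi :: "nat \<Rightarrow> nat \<Rightarrow> int \<Rightarrow> int \<Rightarrow> complex" where
  "oddm_phi M N m' n' =
     (if 0 \<le> m' \<and> m' \<le> int M - 1 then 1
      else if - int M + 1 \<le> m' \<and> m' < 0
        then exp (- 2 * pi * \<i> * complex_of_real (real_of_int n' / real N))
      else 0)"

end

theory Submission
  imports Defs
begin

(* At the sample time t = (m + nd M) Ts, the term of s(t - (lp Ts - b t)) coming from the grid
   point (m', nd') is weighted by a((l - lp + b (m + nd M)) Ts), where l = m + nd M - (m' + nd' M).
   The synchronisation hypotheses confine the support of a to 0 <= l <= l'max < M, and for each
   such l there is exactly one grid point, m' = (m - l) mod M and nd' = nd + (m - l) div M, where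
   (m - l) div M is 0 or -1.  Thanks to the prefix x[m', -1] = x[m', N - 1], the symbol x[m', nd']
   is the inverse DFT of X evaluated at nd', for every nd' >= -1; after the substitution
   n' = (n - k) mod N all phases combine exactly: the factor for the row wrap (m - l) div M = -1 is
   phi, and the rest is the phase in G_l(m, k).  Swapping the four finite sums finishes the proof. *)

definition cis2pi :: "real \<Rightarrow> complex" where
  "cis2pi x = exp (2 * pi * \<i> * complex_of_real x)"

lemma cis2pi_conv_cis: "cis2pi x = cis (2 * pi * x)"
  unfolding cis2pi_def cis_conv_exp by (simp add: algebra_simps)

lemma cis2pi_add: "cis2pi x * cis2pi y = cis2pi (x + y)"
  unfolding cis2pi_conv_cis cis_mult by (simp add: algebra_simps)

lemma cis2pi_of_int [simp]: "cis2pi (of_int z) = 1"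
  unfolding cis2pi_conv_cis by simp

lemma exp_minus_conv_cis2pi: "exp (- 2 * pi * \<i> * complex_of_real x) = cis2pi (- x)"
  unfolding cis2pi_def by simp

lemma cis2pi_eq_if_diff_int:
  assumes "x - y = of_int z"
  shows "cis2pi x = cis2pi y"
proof -
  have "x = y + of_int z"
    using assms by simp
  then show ?thesis
    by (metis cis2pi_add cis2pi_of_int mult.right_neutral)
qed

lemma cis2pi_cong_mod:
  assumes "N > 0" and "j mod int N = j' mod int N"
  shows "cis2pi (real_of_int (j * d) / real N) = cis2pi (real_of_int (j' * d) / real N)"
proof -
  obtain q where "j - j' = int N * q"
    using assms(2) by (auto simp: mod_eq_dvd_iff elim: dvdE)
  then have "j = j' + q * int N"
    by (simp add: algebra_simps)
  then have "real_of_int (j * d) / real N - real_of_int (j' * d) / real N = of_int (q * d)"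
    using assms(1) by (simp add: field_simps)
  then show ?thesis
    by (rule cis2pi_eq_if_diff_int)
qed

lemma sum_mod_diff_reindex:
  fixes f :: "int \<Rightarrow> 'a::comm_monoid_add"
  assumes "N > 0"
  shows "(\<Sum>j = 0..int N - 1. f j) = (\<Sum>k = 0..int N - 1. f ((n - k) mod int N))"
  by (rule sum.reindex_bij_witness[where i = "\<lambda>k. (n - k) mod int N" and j = "\<lambda>k. (n - k) mod int N"])
     (use assms in \<open>auto simp: mod_diff_right_eq\<close>)

lemma sum_reflect_window:
  fixes f :: "int \<Rightarrow> 'a::comm_monoid_add"
  assumes "finite J" and "{c - L..c} \<subseteq> J"
    and "\<And>j. j \<in> J \<Longrightarrow> f j \<noteq> 0 \<Longrightarrow> c - j \<in> {0..L}"
  shows "sum f J = (\<Sum>l = 0..L. f (c - l))"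
proof -
  have "sum f J = sum f {c - L..c}"
    by (rule sum.mono_neutral_right) (use assms in force)+
  also have "\<dots> = (\<Sum>l = 0..L. f (c - l))"
    by (rule sum.reindex_bij_witness[where i = "\<lambda>l. c - l" and j = "\<lambda>l. c - l"]) auto
  finally show ?thesis .
qed

lemma sum_reorder4:
  "(\<Sum>a\<in>A. \<Sum>b\<in>B. \<Sum>c\<in>C. \<Sum>d\<in>D. f a b c d) = (\<Sum>c\<in>C. \<Sum>d\<in>D. \<Sum>b\<in>B. \<Sum>a\<in>A. f a b c d)"
  by (simp only: sum.swap[of _ A] sum.swap[of _ B C] sum.swap[of _ B D])

lemma oddm_x_eq_dft:
  assumes "N > 0"
  shows "oddm_x N X mm nd = complex_of_real (1 / sqrt (real N)) *
    (\<Sum>k = 0..int N - 1. X mm ((n - k) mod int N) * cis2pi (real_of_int ((n - k) * nd) / real N))"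
proof -
  let ?nd' = "if nd = -1 then int N - 1 else nd"
  have "?nd' mod int N = nd mod int N"
    using assms by (auto simp: mod_diff_left_eq [symmetric])
  then have "cis2pi (real_of_int (j * ?nd') / real N) = cis2pi (real_of_int (j * nd) / real N)" for j
    using cis2pi_cong_mod[OF assms, of ?nd' nd j] by (simp add: mult.commute)
  then have "oddm_x N X mm nd = complex_of_real (1 / sqrt (real N)) *
      (\<Sum>j = 0..int N - 1. X mm j * cis2pi (real_of_int (j * nd) / real N))"
    unfolding oddm_x_def Let_def cis2pi_def[symmetric] by presburger
  also have "\<dots> = complex_of_real (1 / sqrt (real N)) *
      (\<Sum>k = 0..int N - 1. X mm ((n - k) mod int N) * cis2pi (real_of_int (((n - k) mod int N) * nd) / real N))"
    by (subst sum_mod_diff_reindex[OF assms]) (rule refl)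
  also have "\<dots> = complex_of_real (1 / sqrt (real N)) *
      (\<Sum>k = 0..int N - 1. X mm ((n - k) mod int N) * cis2pi (real_of_int ((n - k) * nd) / real N))"
    using cis2pi_cong_mod[OF assms, of "(n - k) mod int N" "n - k" nd for k] by simp
  finally show ?thesis .
qed

lemma oddm_s_eq_sum_index:
  assumes "M > 0"
  shows "oddm_s M N Ts a X t =
    (\<Sum>j = - int M..int N * int M - 1. oddm_x N X (j mod int M) (j div int M) * a (t - real_of_int j * Ts))"
proof -
  have "oddm_s M N Ts a X t = (\<Sum>(mm, nd) \<in> {0..int M - 1} \<times> {-1..int N - 1}.
      oddm_x N X mm nd * a (t - real_of_int mm * Ts - real_of_int nd * (real M * Ts)))"
    unfolding oddm_s_def by (simp add: sum.cartesian_product)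
  also have "\<dots> = (\<Sum>j = - int M..int N * int M - 1.
      oddm_x N X (j mod int M) (j div int M) * a (t - real_of_int j * Ts))"
  proof (rule sum.reindex_bij_witness[where i = "\<lambda>j. (j mod int M, j div int M)"
        and j = "\<lambda>(mm, nd). mm + nd * int M"])
    show "(j mod int M, j div int M) \<in> {0..int M - 1} \<times> {-1..int N - 1}"
      if "j \<in> {- int M..int N * int M - 1}" for j
    proof -
      have "j div int M * int M = j - j mod int M"
        by (simp add: minus_mod_eq_div_mult)
      also have "\<dots> \<le> j"
        using assms by simp
      also have "\<dots> < int N * int M"
        using that by simp
      finally have upper: "j div int M < int N"
        by (rule mult_right_less_imp_less) simp
      have "(- int M) div int M \<le> j div int M"
        using that by (intro zdiv_mono1) (auto simp: assms)
      moreover have "(- int M) div int M = -1"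
        using assms by (simp add: zdiv_zminus1_eq_if)
      ultimately show ?thesis
        using upper assms by simp
    qed
    show "(case p of (mm, nd) \<Rightarrow> mm + nd * int M) \<in> {- int M..int N * int M - 1}"
      if p_grid: "p \<in> {0..int M - 1} \<times> {-1..int N - 1}" for p
    proof -
      obtain mm nd where p: "p = (mm, nd)" "0 \<le> mm" "mm \<le> int M - 1" "-1 \<le> nd" "nd \<le> int N - 1"
        using p_grid by auto
      have "-1 * int M \<le> nd * int M" and "nd * int M \<le> (int N - 1) * int M"
        using p by (intro mult_right_mono; simp)+
      then show ?thesis
        using p by (simp add: algebra_simps)
    qed
  qed (auto simp: assms algebra_simps)
  finally show ?thesis .
qed

lemma delay_index_bounds:
  fixes M N Q :: nat and bmax lpi bi u :: real and lmin lmax q :: int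
  assumes "real_of_int lmin \<le> lpi" "lpi \<le> real_of_int lmax" and "\<bar>bi\<bar> \<le> bmax"
    and "0 \<le> u" "u \<le> real N * real M - 1"
    and "\<lceil>real_of_int lmin - real Q - bmax * (real N * real M - 1)\<rceil> = 0"
    and "\<bar>real_of_int q - lpi + bi * u\<bar> < real Q"
  shows "0 \<le> q" and "q \<le> \<lfloor>real_of_int lmax + real Q + bmax * (real N * real M - 1)\<rfloor>"
proof -
  have "\<bar>bi * u\<bar> \<le> bmax * (real N * real M - 1)"
    using assms(3-5) by (simp add: abs_mult mult_mono)
  then have "real_of_int lmin - real Q - bmax * (real N * real M - 1) < real_of_int q"
    and "real_of_int q < real_of_int lmax + real Q + bmax * (real N * real M - 1)"
    using assms(1,2,7) by linarith+
  moreover have "-1 < real_of_int lmin - real Q - bmax * (real N * real M - 1)"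
    using assms(6) by linarith
  ultimately show "0 \<le> q" and "q \<le> \<lfloor>real_of_int lmax + real Q + bmax * (real N * real M - 1)\<rfloor>"
    by (linarith, subst le_floor_iff, linarith)
qed

lemma oddm_phi_eq_cis2pi:
  assumes "- int M < m'" and "m' < int M"
  shows "oddm_phi M N m' n' = cis2pi (real_of_int (m' div int M * n') / real N)"
proof (cases "0 \<le> m'")
  case True
  then have "m' div int M = 0"
    using assms by simp
  then show ?thesis
    using True assms by (simp add: oddm_phi_def cis2pi_def)
next
  case False
  have "(m' + int M) div int M = 0"
    using False assms by simp
  then have "m' div int M = -1"
    using assms by simp
  then show ?thesis
    using False assms by (simp add: oddm_phi_def cis2pi_def)
qed

lemma oddm_s_at_sample:
  fixes M N Q :: nat and Ts bmax lpi bi :: real and lmin lmax m nd :: int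
  assumes "M > 0" and "Ts > 0" and a_support: "\<And>t. \<bar>t\<bar> \<ge> real Q * Ts \<Longrightarrow> a t = 0"
    and "real_of_int lmin \<le> lpi" "lpi \<le> real_of_int lmax" and "\<bar>bi\<bar> \<le> bmax"
    and "\<lceil>real_of_int lmin - real Q - bmax * (real N * real M - 1)\<rceil> = 0"
    and "\<lfloor>real_of_int lmax + real Q + bmax * (real N * real M - 1)\<rfloor> < int M"
    and "0 \<le> m" "m \<le> int M - 1" "0 \<le> nd" "nd \<le> int N - 1"
  defines "t \<equiv> real_of_int m * Ts + real_of_int nd * (real M * Ts)"
  shows "oddm_s M N Ts a X (t - (lpi * Ts - bi * t)) =
    (\<Sum>l = 0..\<lfloor>real_of_int lmax + real Q + bmax * (real N * real M - 1)\<rfloor>.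
       oddm_x N X ((m - l) mod int M) (nd + (m - l) div int M)
       * a ((real_of_int l - lpi + bi * (real_of_int m + real_of_int nd * real M)) * Ts))"
proof -
  define L where "L = \<lfloor>real_of_int lmax + real Q + bmax * (real N * real M - 1)\<rfloor>"
  define c where "c = m + nd * int M"
  define u where "u = real_of_int m + real_of_int nd * real M"
  define F where "F j = oddm_x N X (j mod int M) (j div int M) * a (t - (lpi * Ts - bi * t) - real_of_int j * Ts)"
    for j
  have delay: "t - (lpi * Ts - bi * t) - real_of_int (c - l) * Ts = (real_of_int l - lpi + bi * u) * Ts" for l
    unfolding t_def c_def u_def by (simp add: algebra_simps)
  have "nd * int M \<le> (int N - 1) * int M"
    using assms by (intro mult_right_mono) auto
  then have c_le: "c \<le> int N * int M - 1"
    using assms unfolding c_def by (simp add: algebra_simps)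
  have "real_of_int nd * real M \<le> (real N - 1) * real M"
    using assms by (intro mult_right_mono) auto
  then have u_bounds: "0 \<le> u" "u \<le> real N * real M - 1"
    using assms unfolding u_def by (simp_all add: algebra_simps)
  have window: "c - j \<in> {0..L}" if "F j \<noteq> 0" for j
  proof -
    have "\<bar>(real_of_int (c - j) - lpi + bi * u) * Ts\<bar> < real Q * Ts"
      using that a_support[of "(real_of_int (c - j) - lpi + bi * u) * Ts"] delay[of "c - j"]
      unfolding F_def by fastforce
    then have "\<bar>real_of_int (c - j) - lpi + bi * u\<bar> < real Q"
      using \<open>Ts > 0\<close> by (simp add: abs_mult)
    from delay_index_bounds[OF assms(4-6) u_bounds assms(7) this] show ?thesis
      unfolding L_def by simp
  qed
  have "oddm_s M N Ts a X (t - (lpi * Ts - bi * t)) = (\<Sum>j = - int M..int N * int M - 1. F j)"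
    unfolding F_def by (rule oddm_s_eq_sum_index[OF \<open>M > 0\<close>])
  also have "\<dots> = (\<Sum>l = 0..L. F (c - l))"
  proof (rule sum_reflect_window)
    have "0 \<le> c" and "L < int M"
      using assms unfolding c_def L_def by simp_all
    with c_le show "{c - L..c} \<subseteq> {- int M..int N * int M - 1}"
      by auto
  qed (use window in auto)
  also have "\<dots> = (\<Sum>l = 0..L. oddm_x N X ((m - l) mod int M) (nd + (m - l) div int M)
       * a ((real_of_int l - lpi + bi * u) * Ts))"
  proof (rule sum.cong[OF refl])
    fix l
    have "c - l = (m - l) + nd * int M"
      unfolding c_def by simp
    then have "(c - l) mod int M = (m - l) mod int M" and "(c - l) div int M = nd + (m - l) div int M"
      using \<open>M > 0\<close> by (simp_all only: mod_mult_self1 div_mult_self1 of_nat_0_less_iff)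
    then show "F (c - l) = oddm_x N X ((m - l) mod int M) (nd + (m - l) div int M)
       * a ((real_of_int l - lpi + bi * u) * Ts)"
      unfolding F_def delay using \<open>M > 0\<close> by simp
  qed
  finally show ?thesis
    unfolding L_def u_def .
qed

lemma cis2pi_sample_phase:
  fixes M N :: nat and Ts kpi :: real and m nd n k d :: int
  assumes "M > 0" and "N > 0" and "Ts > 0"
  shows "cis2pi (kpi / (real N * real M * Ts) * (real_of_int m * Ts + real_of_int nd * (real M * Ts)))
      * cis2pi (real_of_int ((n - k) * (nd + d)) / real N) * cis2pi (- (real_of_int (n * nd) / real N))
    = cis2pi (real_of_int (d * (n - k)) / real N) * cis2pi (kpi * real_of_int m / (real N * real M))
      * cis2pi (- (real_of_int nd * (real_of_int k - kpi) / real N))"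
  unfolding cis2pi_add
  by (rule arg_cong[where f = cis2pi]) (use assms in \<open>simp add: field_simps\<close>)

definition oddm_G_summand :: "nat \<Rightarrow> nat \<Rightarrow> real \<Rightarrow> (real \<Rightarrow> complex) \<Rightarrow> (nat \<Rightarrow> complex)
    \<Rightarrow> (nat \<Rightarrow> real) \<Rightarrow> (nat \<Rightarrow> real) \<Rightarrow> (nat \<Rightarrow> real) \<Rightarrow> int \<Rightarrow> int \<Rightarrow> int \<Rightarrow> nat \<Rightarrow> int \<Rightarrow> complex" where
  "oddm_G_summand M N Ts a h lp kp b l m k i nd =
     h i * cis2pi (kp i * real_of_int m / (real N * real M)) * complex_of_real (1 / real N)
     * (cis2pi (- (real_of_int nd * (real_of_int k - kp i) / real N))
        * a ((real_of_int l - lp i + b i * (real_of_int m + real_of_int nd * real M)) * Ts))"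

lemma oddm_G_eq_sum_summand:
  "oddm_G M N Ts a P h lp kp b l m k =
    (\<Sum>i = 1..P. \<Sum>nd = 0..int N - 1. oddm_G_summand M N Ts a h lp kp b l m k i nd)"
  unfolding oddm_G_def oddm_G_summand_def cis2pi_def[symmetric] exp_minus_conv_cis2pi
  by (simp add: sum_distrib_left)

lemma oddm_Y_sample_expansion:
  fixes M N Q P :: nat and Ts bmax :: real and lmin lmax m n nd :: int
  assumes "M > 0" and "N > 0" and "Ts > 0"
    and "\<And>t. \<bar>t\<bar> \<ge> real Q * Ts \<Longrightarrow> a t = 0"
    and lp_bounds: "\<And>i. i \<in> {1..P} \<Longrightarrow> real_of_int lmin \<le> lp i \<and> lp i \<le> real_of_int lmax"
    and b_bound: "\<And>i. i \<in> {1..P} \<Longrightarrow> \<bar>b i\<bar> \<le> bmax"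
    and "\<lceil>real_of_int lmin - real Q - bmax * (real N * real M - 1)\<rceil> = 0"
    and "\<lfloor>real_of_int lmax + real Q + bmax * (real N * real M - 1)\<rfloor> < int M"
    and "0 \<le> m" "m \<le> int M - 1" "0 \<le> nd" "nd \<le> int N - 1"
  shows "complex_of_real (1 / sqrt (real N)) *
      (oddm_r M N Ts a X P h lp kp b (real_of_int m * Ts + real_of_int nd * (real M * Ts))
       * exp (- 2 * pi * \<i> * complex_of_real (real_of_int (n * nd) / real N)))
    = (\<Sum>i = 1..P. \<Sum>l = 0..\<lfloor>real_of_int lmax + real Q + bmax * (real N * real M - 1)\<rfloor>.
        \<Sum>k = 0..int N - 1. X ((m - l) mod int M) ((n - k) mod int N) * oddm_phi M N (m - l) (n - k)
          * oddm_G_summand M N Ts a h lp kp b l m k i nd)"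
proof -
  define L where "L = \<lfloor>real_of_int lmax + real Q + bmax * (real N * real M - 1)\<rfloor>"
  define c where "c = complex_of_real (1 / sqrt (real N))"
  define t where "t = real_of_int m * Ts + real_of_int nd * (real M * Ts)"
  define E where "E i = cis2pi (kp i / (real N * real M * Ts) * t)" for i
  define A where "A i l = a ((real_of_int l - lp i + b i * (real_of_int m + real_of_int nd * real M)) * Ts)" for i l
  define XX where "XX l k = X ((m - l) mod int M) ((n - k) mod int N)" for l k
  define D where "D l k = cis2pi (real_of_int ((n - k) * (nd + (m - l) div int M)) / real N)" for l k
  have s_eq: "oddm_s M N Ts a X (t - (lp i * Ts - b i * t)) = (\<Sum>l = 0..L. c * (\<Sum>k = 0..int N - 1. XX l k * D l k) * A i l)"
    if "i \<in> {1..P}" for i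
    unfolding t_def L_def A_def c_def XX_def D_def oddm_x_eq_dft[OF \<open>N > 0\<close>, symmetric]
    by (rule oddm_s_at_sample) (use assms lp_bounds[OF that] b_bound[OF that] in auto)
  have summand_eq: "c * (h i * E i * (c * (XX l k * D l k) * A i l) * cis2pi (- (real_of_int (n * nd) / real N)))
      = XX l k * oddm_phi M N (m - l) (n - k) * oddm_G_summand M N Ts a h lp kp b l m k i nd"
    if "l \<in> {0..L}" for i l k
  proof -
    have "- int M < m - l" "m - l < int M"
      using that assms unfolding L_def by auto
    then have phi: "oddm_phi M N (m - l) (n - k) = cis2pi (real_of_int ((m - l) div int M * (n - k)) / real N)"
      by (rule oddm_phi_eq_cis2pi)
    have cc: "c * c = complex_of_real (1 / real N)"
      unfolding c_def by (simp flip: of_real_mult)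
    have "c * (h i * E i * (c * (XX l k * D l k) * A i l) * cis2pi (- (real_of_int (n * nd) / real N)))
        = (c * c) * h i * XX l k * A i l * (E i * D l k * cis2pi (- (real_of_int (n * nd) / real N)))"
      by (simp only: ac_simps)
    also have "\<dots> = XX l k * oddm_phi M N (m - l) (n - k) * oddm_G_summand M N Ts a h lp kp b l m k i nd"
      unfolding cc phi oddm_G_summand_def E_def D_def A_def t_def
        cis2pi_sample_phase[OF assms(1-3), of "kp i" m nd n k "(m - l) div int M"]
      by (simp only: ac_simps)
    finally show ?thesis .
  qed
  have "complex_of_real (1 / sqrt (real N)) * (oddm_r M N Ts a X P h lp kp b t
       * exp (- 2 * pi * \<i> * complex_of_real (real_of_int (n * nd) / real N)))
    = (\<Sum>i = 1..P. \<Sum>l = 0..L. \<Sum>k = 0..int N - 1.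
        c * (h i * E i * (c * (XX l k * D l k) * A i l) * cis2pi (- (real_of_int (n * nd) / real N))))"
    unfolding oddm_r_def c_def[symmetric] cis2pi_def[symmetric] exp_minus_conv_cis2pi E_def[symmetric]
    by (simp add: s_eq sum_distrib_left sum_distrib_right)
  also have "\<dots> = (\<Sum>i = 1..P. \<Sum>l = 0..L. \<Sum>k = 0..int N - 1.
        XX l k * oddm_phi M N (m - l) (n - k) * oddm_G_summand M N Ts a h lp kp b l m k i nd)"
    by (intro sum.cong refl summand_eq)
  finally show ?thesis
    unfolding t_def L_def XX_def .
qed

theorem theorem1:
  fixes M N Q P :: nat and Ts bmax :: real and lmin lmax :: int
    and a :: "real \<Rightarrow> complex" and X :: "int \<Rightarrow> int \<Rightarrow> complex"
    and h :: "nat \<Rightarrow> complex" and lp kp b :: "nat \<Rightarrow> real"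
    and m n :: int
  assumes "M > 0" and "N > 0" and "Q > 0" and "Ts > 0"
    and "\<And>t. \<bar>t\<bar> \<ge> real Q * Ts \<Longrightarrow> a t = 0"
    and "\<And>i. i \<in> {1..P} \<Longrightarrow> real_of_int lmin \<le> lp i \<and> lp i \<le> real_of_int lmax"
    and "\<And>i. i \<in> {1..P} \<Longrightarrow> \<bar>b i\<bar> \<le> bmax"
    and "bmax < 1"
    and "\<lceil>real_of_int lmin - real Q - bmax * (real N * real M - 1)\<rceil> = 0"
    and "\<lfloor>real_of_int lmax + real Q + bmax * (real N * real M - 1)\<rfloor> < int M"
    and "0 \<le> m" and "m \<le> int M - 1" and "0 \<le> n" and "n \<le> int N - 1"
  shows "oddm_Y M N Ts a X P h lp kp b m n =
    (\<Sum>l = 0..\<lfloor>real_of_int lmax + real Q + bmax * (real N * real M - 1)\<rfloor>.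
       \<Sum>k = 0..int N - 1.
         X ((m - l) mod int M) ((n - k) mod int N) * oddm_phi M N (m - l) (n - k)
         * oddm_G M N Ts a P h lp kp b l m k)"
proof -
  define L where "L = \<lfloor>real_of_int lmax + real Q + bmax * (real N * real M - 1)\<rfloor>"
  define T where "T l k i nd = X ((m - l) mod int M) ((n - k) mod int N) * oddm_phi M N (m - l) (n - k)
      * oddm_G_summand M N Ts a h lp kp b l m k i nd" for l k i nd
  have "oddm_Y M N Ts a X P h lp kp b m n =
      (\<Sum>nd = 0..int N - 1. \<Sum>i = 1..P. \<Sum>l = 0..L. \<Sum>k = 0..int N - 1. T l k i nd)"
    unfolding oddm_Y_def sum_distrib_left L_def T_def
    by (intro sum.cong refl oddm_Y_sample_expansion) (use assms in auto)
  also have "\<dots> = (\<Sum>l = 0..L. \<Sum>k = 0..int N - 1. \<Sum>i = 1..P. \<Sum>nd = 0..int N - 1. T l k i nd)"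
    by (rule sum_reorder4)
  also have "\<dots> = (\<Sum>l = 0..L. \<Sum>k = 0..int N - 1.
      X ((m - l) mod int M) ((n - k) mod int N) * oddm_phi M N (m - l) (n - k)
      * oddm_G M N Ts a P h lp kp b l m k)"
    unfolding oddm_G_eq_sum_summand T_def by (simp add: sum_distrib_left)
  finally show ?thesis
    unfolding L_def .
qed

end
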